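(* Let $S$ be a hyperstonean space, let $N$ be the family of meager subsets of $S$ and $M$ the family of symmetric differences of open sets and meager sets. Then $(S,M,N)$ is a compact strictly localizable enhanced measurable space. Moreover, every continuous open map $f:S\to S'$ between hyperstonean spaces satisfies $f^*M'\subset M$ and $f^*N'\subset N$, so this construction defines a functor $\mathrm{TM}:\mathsf{HStonean}\to\mathsf{CSLEMS}$.
   Context: A hyperstonean space is a compact Hausdorff totally disconnected space in which the closure of every open set is open and such that for every nonempty open $U$ there is a map $\nu$ from open sets to $[0,\infty)$ with $\nu(\emptyset)=0$, $\nu(U_1)+\nu(U_2)=\nu(U_1\cup U_2)+\nu(U_1\cap U_2)$, monotone, preserving suprema of directed families, with $\nu(\overline V)=\nu(V)$ for all open $V$, and $\nu(U)\neq0$. $\mathsf{HStonean}$: hyperstonean spaces and continuous open maps. Enhanced measurable space $(X,M,N)$: $M$ a $\sigma$-algebra, $N\subset M$ closed under subsets and countable unions; morphisms in $\mathsf{EMS}$: classes of premaps $f:X_0\to Y$ ($X\setminus X_0\in N_X$, $f^*M_Y\subset M_X$, $f^*N_Y\subset N_X$) modulo $f^*m\oplus g^*m\in N_X$ for all $m\in M_Y$. Finite measure: countably additive $\mu:M\to\mathbb{C}$ vanishing on $N$; faithful if vanishing on all measurable subsets of $m$ forces $m\in N$; $\sigma$-finite: admits a faithful finite measure. Strictly localizable: partition $\{X_i\}\subset M$ with $\sigma$-finite induced subspaces such that $A\in M$ (resp. $N$) iff $A\cap X_i\in M$ (resp. $N$) for all $i$. Compact: there is a compact class $K\subset M$ (subfamilies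 with finite intersection property have nonempty intersection) with every $m\in M\setminus N$ containing some $k\in K\setminus N$. $\mathsf{CSLEMS}$: full subcategory of $\mathsf{EMS}$ on compact strictly localizable spaces. *)

theory Defs
  imports "HOL-Analysis.Analysis"
begin

definition totally_disconnected_space :: "'a topology \<Rightarrow> bool" where
  "totally_disconnected_space X \<longleftrightarrow>
     (\<forall>C. connectedin X C \<longrightarrow> (\<exists>x. C \<subseteq> {x}))"

definition nowhere_dense_in :: "'a topology \<Rightarrow> 'a set \<Rightarrow> bool" where
  "nowhere_dense_in X A \<longleftrightarrow> A \<subseteq> topspace X \<and> X interior_of (X closure_of A) = {}"

definition meager_in :: "'a topology \<Rightarrow> 'a set \<Rightarrow> bool" where
  "meager_in X A \<longleftrightarrow> A \<subseteq> topspace X \<and>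
     (\<exists>F::nat \<Rightarrow> 'a set. (\<forall>n. nowhere_dense_in X (F n)) \<and> A \<subseteq> (\<Union>n. F n))"

definition normal_open_measure :: "'a topology \<Rightarrow> ('a set \<Rightarrow> real) \<Rightarrow> bool" where
  "normal_open_measure X \<nu> \<longleftrightarrow>
     (\<forall>V. openin X V \<longrightarrow> \<nu> V \<ge> 0) \<and>
     \<nu> {} = 0 \<and>
     (\<forall>U1 U2. openin X U1 \<longrightarrow> openin X U2 \<longrightarrow>
        \<nu> U1 + \<nu> U2 = \<nu> (U1 \<union> U2) + \<nu> (U1 \<inter> U2)) \<and>
     (\<forall>U1 U2. openin X U1 \<longrightarrow> openin X U2 \<longrightarrow> U1 \<subseteq> U2 \<longrightarrow> \<nu> U1 \<le> \<nu> U2) \<and>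
     (\<forall>D. D \<noteq> {} \<longrightarrow> (\<forall>V\<in>D. openin X V) \<longrightarrow>
        (\<forall>A\<in>D. \<forall>B\<in>D. \<exists>C\<in>D. A \<union> B \<subseteq> C) \<longrightarrow>
        \<nu> (\<Union>D) = (SUP V\<in>D. \<nu> V)) \<and>
     (\<forall>V. openin X V \<longrightarrow> \<nu> (X closure_of V) = \<nu> V)"

definition hyperstonean :: "'a topology \<Rightarrow> bool" where
  "hyperstonean X \<longleftrightarrow>
     compact_space X \<and> Hausdorff_space X \<and> totally_disconnected_space X \<and>
     (\<forall>U. openin X U \<longrightarrow> openin X (X closure_of U)) \<and>
     (\<forall>U. openin X U \<longrightarrow> U \<noteq> {} \<longrightarrow>
        (\<exists>\<nu>. normal_open_measure X \<nu> \<and> \<nu> U \<noteq> 0))"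

definition enhanced_measurable_space :: "'a set \<Rightarrow> 'a set set \<Rightarrow> 'a set set \<Rightarrow> bool" where
  "enhanced_measurable_space X M N \<longleftrightarrow>
     sigma_algebra X M \<and> N \<subseteq> M \<and>
     (\<forall>A B. B \<in> N \<longrightarrow> A \<subseteq> B \<longrightarrow> A \<in> N) \<and>
     (\<forall>F::nat \<Rightarrow> 'a set. range F \<subseteq> N \<longrightarrow> (\<Union>n. F n) \<in> N)"

definition ems_finite_measure :: "'a set set \<Rightarrow> 'a set set \<Rightarrow> ('a set \<Rightarrow> complex) \<Rightarrow> bool" where
  "ems_finite_measure M N \<mu> \<longleftrightarrow>
     (\<forall>F::nat \<Rightarrow> 'a set. range F \<subseteq> M \<longrightarrow> disjoint_family F \<longrightarrow>
        (\<lambda>n. \<mu> (F n)) sums \<mu> (\<Union>n. F n)) \<and>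
     (\<forall>A\<in>N. \<mu> A = 0)"

definition ems_faithful :: "'a set set \<Rightarrow> 'a set set \<Rightarrow> ('a set \<Rightarrow> complex) \<Rightarrow> bool" where
  "ems_faithful M N \<mu> \<longleftrightarrow>
     (\<forall>m\<in>M. (\<forall>A\<in>M. A \<subseteq> m \<longrightarrow> \<mu> A = 0) \<longrightarrow> m \<in> N)"

definition ems_sigma_finite :: "'a set set \<Rightarrow> 'a set set \<Rightarrow> bool" where
  "ems_sigma_finite M N \<longleftrightarrow> (\<exists>\<mu>. ems_finite_measure M N \<mu> \<and> ems_faithful M N \<mu>)"

text \<open>Strict localizability; the induced subspace on \<open>Y \<in> M\<close> is
  \<open>(Y, {A\<in>M. A \<subseteq> Y}, {A\<in>N. A \<subseteq> Y})\<close>.\<close>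
definition strictly_localizable :: "'a set \<Rightarrow> 'a set set \<Rightarrow> 'a set set \<Rightarrow> bool" where
  "strictly_localizable X M N \<longleftrightarrow>
     (\<exists>P. P \<subseteq> M \<and> \<Union>P = X \<and> (\<forall>Y\<in>P. \<forall>Z\<in>P. Y \<noteq> Z \<longrightarrow> Y \<inter> Z = {}) \<and>
        (\<forall>Y\<in>P. ems_sigma_finite {A\<in>M. A \<subseteq> Y} {A\<in>N. A \<subseteq> Y}) \<and>
        (\<forall>A. A \<subseteq> X \<longrightarrow> (A \<in> M \<longleftrightarrow> (\<forall>Y\<in>P. A \<inter> Y \<in> M))) \<and>
        (\<forall>A. A \<subseteq> X \<longrightarrow> (A \<in> N \<longleftrightarrow> (\<forall>Y\<in>P. A \<inter> Y \<in> N))))"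

definition compact_class :: "'a set set \<Rightarrow> bool" where
  "compact_class K \<longleftrightarrow>
     (\<forall>F. F \<subseteq> K \<longrightarrow> (\<forall>G. G \<subseteq> F \<longrightarrow> finite G \<longrightarrow> G \<noteq> {} \<longrightarrow> \<Inter>G \<noteq> {})
        \<longrightarrow> \<Inter>F \<noteq> {})"

definition compact_ems :: "'a set set \<Rightarrow> 'a set set \<Rightarrow> bool" where
  "compact_ems M N \<longleftrightarrow>
     (\<exists>K. K \<subseteq> M \<and> compact_class K \<and> (\<forall>m\<in>M - N. \<exists>k\<in>K - N. k \<subseteq> m))"

definition cslems :: "'a set \<Rightarrow> 'a set set \<Rightarrow> 'a set set \<Rightarrow> bool" where
  "cslems X M N \<longleftrightarrow> enhanced_measurable_space X M N \<and> compact_ems M N \<and>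
     strictly_localizable X M N"

definition TM_null :: "'a topology \<Rightarrow> 'a set set" where
  "TM_null S = {A. meager_in S A}"

definition TM_meas :: "'a topology \<Rightarrow> 'a set set" where
  "TM_meas S = {(U - A) \<union> (A - U) | U A. openin S U \<and> meager_in S A}"

end

theory Submission
  imports Defs
begin

(* Every non-empty open set of a hyperstonean space carries a normal measure that does not
   vanish on it, and a normal measure cannot be carried by a countable union of nowhere dense
   sets. Hence countable unions of nowhere dense sets are nowhere dense: meager means nowhere
   dense, and TM_meas S consists of the sets differing from an open set by a nowhere dense one.
   Closed sets then form a compact class, and a maximal disjoint family of open sets carrying
   faithful normal measures (Zorn) has dense union; with the nowhere dense rest of the space it
   localizes TM S, the measure of a set being that of its open representative. Continuous open
   maps pull nowhere dense sets back to nowhere dense sets. *)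

section \<open>Topological preliminaries\<close>

lemma nowhere_dense_in_iff:
  "nowhere_dense_in X A \<longleftrightarrow> A \<subseteq> topspace X \<and>
     (\<forall>T. openin X T \<and> T \<subseteq> X closure_of A \<longrightarrow> T = {})"
  unfolding nowhere_dense_in_def interior_of_eq_empty by blast

lemma nowhere_dense_in_subset: "nowhere_dense_in X B \<Longrightarrow> A \<subseteq> B \<Longrightarrow> nowhere_dense_in X A"
  unfolding nowhere_dense_in_iff by (meson closure_of_mono subset_trans)

lemma nowhere_dense_in_empty [simp]: "nowhere_dense_in X {}"
  by (simp add: nowhere_dense_in_iff)

lemma openin_nowhere_dense_in_eq_empty: "openin X T \<Longrightarrow> nowhere_dense_in X T \<Longrightarrow> T = {}"
  unfolding nowhere_dense_in_iff by (meson closure_of_subset openin_subset)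

lemma nowhere_dense_in_imp_meager_in: "nowhere_dense_in X A \<Longrightarrow> meager_in X A"
  unfolding meager_in_def by (auto simp: nowhere_dense_in_def intro!: exI[of _ "\<lambda>_. A"])

lemma nowhere_dense_in_closure_of_diff_openin:
  assumes "openin X U"
  shows "nowhere_dense_in X (X closure_of U - U)"
  unfolding nowhere_dense_in_iff
proof (intro conjI allI impI)
  show "X closure_of U - U \<subseteq> topspace X" using closure_of_subset_topspace by fastforce
  fix T assume T: "openin X T \<and> T \<subseteq> X closure_of (X closure_of U - U)"
  then have "T \<subseteq> X closure_of U - U"
    using assms by (simp add: closure_of_closedin closedin_diff)
  then have "T \<inter> X closure_of U = T" "T \<inter> U = {}" by blast+
  then show "T = {}" using T openin_Int_closure_of_eq_empty[of X T U] by simp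
qed

lemma nowhere_dense_in_complement_dense_open:
  assumes "openin X G" "X closure_of G = topspace X"
  shows "nowhere_dense_in X (topspace X - G)"
  using assms unfolding nowhere_dense_in_def
  by (simp add: closure_of_complement interior_of_openin interior_of_complement)

lemma closure_of_complement_closure_of_nowhere_dense:
  "nowhere_dense_in X F \<Longrightarrow> X closure_of (topspace X - X closure_of F) = topspace X"
  by (simp add: closure_of_complement nowhere_dense_in_def)

lemma nowhere_dense_in_local:
  assumes \<F>: "\<forall>Y\<in>\<F>. openin X Y" and B: "B \<subseteq> \<Union>\<F>"
    and local: "\<And>Y. Y \<in> \<F> \<Longrightarrow> nowhere_dense_in X (B \<inter> Y)"
  shows "nowhere_dense_in X B"
  unfolding nowhere_dense_in_iff
proof (intro conjI allI impI)
  show "B \<subseteq> topspace X" using \<F> B openin_subset by blast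
  fix T assume T: "openin X T \<and> T \<subseteq> X closure_of B"
  show "T = {}"
  proof (rule ccontr)
    assume "T \<noteq> {}"
    then have "T \<inter> B \<noteq> {}"
      using T openin_Int_closure_of_eq_empty[of X T B] by blast
    then obtain x Y where x: "x \<in> T" "x \<in> Y" and Y: "Y \<in> \<F>" using B by blast
    have "openin X (T \<inter> Y)" using T \<F> Y by blast
    then have "T \<inter> Y \<subseteq> X closure_of (T \<inter> Y \<inter> B)"
      using T openin_Int_closure_of_subset[of X "T \<inter> Y" B] by blast
    also have "\<dots> \<subseteq> X closure_of (B \<inter> Y)" by (intro closure_of_mono) blast
    finally have "T \<inter> Y = {}"
      using local[OF Y] \<open>openin X (T \<inter> Y)\<close> unfolding nowhere_dense_in_iff by blast
    then show False using x by blast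
  qed
qed

lemma closure_of_eq_if_nowhere_dense_sym_diff:
  assumes "openin X U" "openin X V" "nowhere_dense_in X (sym_diff U V)"
  shows "X closure_of U = X closure_of V"
proof -
  have "X closure_of U \<subseteq> X closure_of V"
    if "openin X U" "openin X V" "nowhere_dense_in X (sym_diff U V)" for U V
  proof -
    have "U - X closure_of V \<subseteq> sym_diff U V"
      using closure_of_subset[OF openin_subset[OF \<open>openin X V\<close>]] by blast
    then have "U - X closure_of V = {}"
      using that by (meson closedin_closure_of openin_diff openin_nowhere_dense_in_eq_empty
          nowhere_dense_in_subset)
    then show ?thesis by (metis Diff_eq_empty_iff closure_of_closure_of closure_of_mono)
  qed
  from this[OF assms] this[OF assms(2,1)] assms(3) show ?thesis by (simp add: Un_commute)
qed

lemma regular_space_closure_of_subset_openin: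
  assumes "regular_space X" "openin X W" "x \<in> W"
  shows "\<exists>U. openin X U \<and> x \<in> U \<and> X closure_of U \<subseteq> W"
proof -
  obtain U V where "openin X U" "closedin X V" "x \<in> U" "U \<subseteq> V" "V \<subseteq> W"
    using assms neighbourhood_base_of_closedin[of X] unfolding neighbourhood_base_of by blast
  moreover have "X closure_of U \<subseteq> V" using \<open>closedin X V\<close> \<open>U \<subseteq> V\<close> by (simp add: closure_of_minimal)
  ultimately show ?thesis by blast
qed

lemma exists_pairwise_disjnt_dense_subfamily:
  assumes nonempty: "\<And>Y. Y \<in> \<G> \<Longrightarrow> Y \<noteq> {}"
    and cofinal: "\<And>U. openin X U \<Longrightarrow> U \<noteq> {} \<Longrightarrow> \<exists>Y\<in>\<G>. Y \<subseteq> U"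
  shows "\<exists>\<F>\<subseteq>\<G>. pairwise disjnt \<F> \<and> X closure_of \<Union>\<F> = topspace X"
proof -
  define \<A> where "\<A> = {\<F>. \<F> \<subseteq> \<G> \<and> pairwise disjnt \<F>}"
  have "\<Union>\<C> \<in> \<A>" if "\<C> \<in> chains \<A>" for \<C>
  proof -
    have "\<C> \<subseteq> \<A>" "chain\<^sub>\<subseteq> \<C>" using that unfolding chains_def by auto
    then have "pairwise disjnt (\<Union>\<C>)" by (intro pairwise_chain_Union) (auto simp: \<A>_def)
    then show ?thesis using \<open>\<C> \<subseteq> \<A>\<close> unfolding \<A>_def by blast
  qed
  then obtain \<F> where \<F>: "\<F> \<in> \<A>" and max: "\<And>\<F>'. \<F>' \<in> \<A> \<Longrightarrow> \<F> \<subseteq> \<F>' \<Longrightarrow> \<F>' = \<F>"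
    using Zorn_Lemma[of \<A>] by blast
  have "X closure_of \<Union>\<F> = topspace X"
  proof (rule ccontr)
    let ?U = "topspace X - X closure_of \<Union>\<F>"
    assume "X closure_of \<Union>\<F> \<noteq> topspace X"
    then have "?U \<noteq> {}" using closure_of_subset_topspace[of X "\<Union>\<F>"] by blast
    moreover have "openin X ?U" by (simp add: openin_diff)
    ultimately obtain Y where Y: "Y \<in> \<G>" "Y \<subseteq> ?U" using cofinal by blast
    have disjY: "disjnt Y Z" if "Z \<in> \<F>" for Z
      using that Y(2) closure_of_subset_Int[of X "\<Union>\<F>"] by (auto simp: disjnt_def)
    have "insert Y \<F> \<in> \<A>"
      using \<F> Y(1) disjY unfolding \<A>_def by (simp add: pairwise_insert disjnt_sym)
    then have "Y \<in> \<F>" using max by blast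
    then show False using disjY[of Y] nonempty[OF Y(1)] by (simp add: disjnt_def)
  qed
  then show ?thesis using \<F> unfolding \<A>_def by blast
qed

section \<open>Normal measures on open sets\<close>

definition faithful_on :: "'a topology \<Rightarrow> ('a set \<Rightarrow> real) \<Rightarrow> 'a set \<Rightarrow> bool" where
  "faithful_on X \<nu> Y \<longleftrightarrow> (\<forall>V. openin X V \<longrightarrow> V \<subseteq> Y \<longrightarrow> V \<noteq> {} \<longrightarrow> \<nu> V \<noteq> 0)"

lemma UN_lessThan_Suc_eq: "(\<Union>n<Suc k. V n) = (\<Union>n<k. V n) \<union> V k"
  by (auto simp: lessThan_Suc)

context
  fixes X :: "'a topology" and \<nu> :: "'a set \<Rightarrow> real"
  assumes \<nu>: "normal_open_measure X \<nu>"
begin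

lemma normal_open_measure_nonneg: "openin X V \<Longrightarrow> \<nu> V \<ge> 0"
  and normal_open_measure_empty: "\<nu> {} = 0"
  and normal_open_measure_modular:
    "openin X U \<Longrightarrow> openin X V \<Longrightarrow> \<nu> U + \<nu> V = \<nu> (U \<union> V) + \<nu> (U \<inter> V)"
  and normal_open_measure_mono: "openin X U \<Longrightarrow> openin X V \<Longrightarrow> U \<subseteq> V \<Longrightarrow> \<nu> U \<le> \<nu> V"
  and normal_open_measure_directed_Union:
    "D \<noteq> {} \<Longrightarrow> \<forall>V\<in>D. openin X V \<Longrightarrow> \<forall>A\<in>D. \<forall>B\<in>D. \<exists>C\<in>D. A \<union> B \<subseteq> C \<Longrightarrow>
      \<nu> (\<Union>D) = (SUP V\<in>D. \<nu> V)"
  and normal_open_measure_closure_of: "openin X V \<Longrightarrow> \<nu> (X closure_of V) = \<nu> V"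
  using \<nu> unfolding normal_open_measure_def by simp_all

lemma normal_open_measure_le_topspace: "openin X V \<Longrightarrow> \<nu> V \<le> \<nu> (topspace X)"
  by (simp add: normal_open_measure_mono openin_subset)

lemma normal_open_measure_Un_le:
  "openin X U \<Longrightarrow> openin X V \<Longrightarrow> \<nu> (U \<union> V) \<le> \<nu> U + \<nu> V"
  using normal_open_measure_modular[of U V] normal_open_measure_nonneg[of "U \<inter> V"] by force

lemma normal_open_measure_Un_disjoint:
  "openin X U \<Longrightarrow> openin X V \<Longrightarrow> U \<inter> V = {} \<Longrightarrow> \<nu> (U \<union> V) = \<nu> U + \<nu> V"
  using normal_open_measure_modular[of U V] by (simp add: normal_open_measure_empty)

lemma normal_open_measure_incseq_tendsto:
  fixes V :: "nat \<Rightarrow> 'a set"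
  assumes "\<And>k. openin X (V k)" "incseq V"
  shows "(\<lambda>k. \<nu> (V k)) \<longlonglongrightarrow> \<nu> (\<Union>k. V k)"
proof -
  have "\<nu> (\<Union>(range V)) = (SUP U\<in>range V. \<nu> U)"
  proof (rule normal_open_measure_directed_Union)
    show "\<forall>A\<in>range V. \<forall>B\<in>range V. \<exists>C\<in>range V. A \<union> B \<subseteq> C"
    proof (intro ballI)
      fix A B assume "A \<in> range V" "B \<in> range V"
      then obtain i j where "A = V i" "B = V j" by blast
      then have "A \<union> B \<subseteq> V (max i j)"
        using monoD[OF \<open>incseq V\<close>, of i "max i j"] monoD[OF \<open>incseq V\<close>, of j "max i j"] by auto
      then show "\<exists>C\<in>range V. A \<union> B \<subseteq> C" by blast
    qed
  qed (use assms in auto)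
  moreover have "(\<lambda>k. \<nu> (V k)) \<longlonglongrightarrow> (SUP k. \<nu> (V k))"
  proof (rule LIMSEQ_incseq_SUP)
    show "bdd_above (range (\<lambda>k. \<nu> (V k)))"
      by (intro bdd_aboveI2) (rule normal_open_measure_le_topspace[OF assms(1)])
    show "incseq (\<lambda>k. \<nu> (V k))"
      using assms normal_open_measure_mono by (simp add: incseq_def)
  qed
  ultimately show ?thesis by (simp add: image_image)
qed

lemma normal_open_measure_UN_lessThan_le:
  fixes V :: "nat \<Rightarrow> 'a set"
  assumes "\<And>n. openin X (V n)"
  shows "\<nu> (\<Union>n<k. V n) \<le> (\<Sum>n<k. \<nu> (V n))"
proof (induction k)
  case (Suc k)
  have "openin X (\<Union>n<k. V n)" using assms by (intro openin_Union) auto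
  then have "\<nu> (\<Union>n<Suc k. V n) \<le> \<nu> (\<Union>n<k. V n) + \<nu> (V k)"
    unfolding UN_lessThan_Suc_eq using assms by (rule normal_open_measure_Un_le)
  then show ?case using Suc by simp
qed (simp add: normal_open_measure_empty)

lemma normal_open_measure_UN_lessThan_disjoint:
  fixes V :: "nat \<Rightarrow> 'a set"
  assumes "\<And>n. openin X (V n)" "disjoint_family V"
  shows "\<nu> (\<Union>n<k. V n) = (\<Sum>n<k. \<nu> (V n))"
proof (induction k)
  case (Suc k)
  have "openin X (\<Union>n<k. V n)" using assms by (intro openin_Union) auto
  moreover have "V n \<inter> V k = {}" if "n < k" for n
    using disjoint_family_onD[OF assms(2), of n k] that by simp
  then have "(\<Union>n<k. V n) \<inter> V k = {}" by blast
  ultimately have "\<nu> (\<Union>n<Suc k. V n) = \<nu> (\<Union>n<k. V n) + \<nu> (V k)"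
    unfolding UN_lessThan_Suc_eq using assms(1) normal_open_measure_Un_disjoint by blast
  then show ?case using Suc by simp
qed (simp add: normal_open_measure_empty)

lemma normal_open_measure_partial_unions_tendsto:
  fixes V :: "nat \<Rightarrow> 'a set"
  assumes "\<And>n. openin X (V n)"
  shows "(\<lambda>k. \<nu> (\<Union>n<k. V n)) \<longlonglongrightarrow> \<nu> (\<Union>n. V n)"
proof -
  have "(\<Union>k. \<Union>n<k. V n) = (\<Union>n. V n)" by (auto intro: lessI)
  moreover have "openin X (\<Union>n<k. V n)" for k using assms by (intro openin_Union) auto
  moreover have "incseq (\<lambda>k. \<Union>n<k. V n)" by (intro monoI UN_mono) auto
  ultimately show ?thesis using normal_open_measure_incseq_tendsto[of "\<lambda>k. \<Union>n<k. V n"] by simp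
qed

lemma normal_open_measure_sums:
  fixes V :: "nat \<Rightarrow> 'a set"
  assumes "\<And>n. openin X (V n)" "disjoint_family V"
  shows "(\<lambda>n. \<nu> (V n)) sums \<nu> (\<Union>n. V n)"
  unfolding sums_def
  using normal_open_measure_partial_unions_tendsto[of V, OF assms(1)]
    normal_open_measure_UN_lessThan_disjoint[of V, OF assms]
  by simp

lemma normal_open_measure_UN_le_sums:
  fixes V :: "nat \<Rightarrow> 'a set"
  assumes "\<And>n. openin X (V n)" "\<And>n. \<nu> (V n) \<le> \<delta> n" "\<delta> sums s"
  shows "\<nu> (\<Union>n. V n) \<le> s"
proof (rule LIMSEQ_le_const2[OF normal_open_measure_partial_unions_tendsto[of V, OF assms(1)]])
  have "\<nu> (\<Union>n<k. V n) \<le> s" for k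
  proof -
    have "\<nu> (\<Union>n<k. V n) \<le> (\<Sum>n<k. \<nu> (V n))"
      by (rule normal_open_measure_UN_lessThan_le[of V, OF assms(1)])
    also have "\<dots> \<le> (\<Sum>n<k. \<delta> n)" by (intro sum_mono assms(2))
    also have "\<dots> \<le> s"
    proof -
      have "0 \<le> \<delta> n" for n
        using normal_open_measure_nonneg[of "V n"] assms(1)[of n] assms(2)[of n] by linarith
      then show ?thesis
        using sums_summable[OF assms(3)] sums_unique[OF assms(3)] by (simp add: sum_le_suminf)
    qed
    finally show ?thesis .
  qed
  then show "\<exists>N. \<forall>k\<ge>N. \<nu> (\<Union>n<k. V n) \<le> s" by blast
qed

lemma normal_open_measure_dense_Int:
  assumes "openin X W" "X closure_of G = topspace X" "openin X G"
  shows "\<nu> (W \<inter> G) = \<nu> W"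
proof -
  have "X closure_of (W \<inter> G) = X closure_of W"
    using assms openin_subset by (intro closure_of_openin_Int_superset) auto
  then show ?thesis
    using assms normal_open_measure_closure_of by (metis openin_Int)
qed

lemma normal_open_measure_not_subset_closure_of:
  assumes "openin X U" "openin X W" "U \<subseteq> W" "\<nu> U < \<nu> W"
  shows "\<not> W \<subseteq> X closure_of U"
proof
  assume "W \<subseteq> X closure_of U"
  then have "X closure_of W = X closure_of U"
    using \<open>U \<subseteq> W\<close> by (metis closure_of_closure_of closure_of_mono subset_antisym)
  then show False using assms normal_open_measure_closure_of by (metis less_irrefl)
qed

text \<open>Inner regularity: an open set is the directed union of the open sets whose closure
  it contains.\<close>
lemma normal_open_measure_inner_closedin:
  assumes "regular_space X" "openin X W" "\<epsilon> > 0"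
  shows "\<exists>C. closedin X C \<and> C \<subseteq> W \<and> \<nu> (W - C) \<le> \<epsilon>"
proof -
  define D where "D = {U. openin X U \<and> X closure_of U \<subseteq> W}"
  have "\<Union>D = W"
  proof
    show "\<Union>D \<subseteq> W"
    proof
      fix x assume "x \<in> \<Union>D"
      then obtain U where "U \<in> D" "x \<in> U" by blast
      then show "x \<in> W" using closure_of_subset[OF openin_subset, of X U] unfolding D_def by blast
    qed
    show "W \<subseteq> \<Union>D"
      using regular_space_closure_of_subset_openin[OF assms(1,2)] unfolding D_def by blast
  qed
  moreover have D: "D \<noteq> {}" "\<forall>U\<in>D. openin X U" "\<forall>A\<in>D. \<forall>B\<in>D. \<exists>C\<in>D. A \<union> B \<subseteq> C"
  proof -
    have "{} \<in> D" unfolding D_def by simp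
    then show "D \<noteq> {}" by blast
    show "\<forall>U\<in>D. openin X U" unfolding D_def by blast
    have "A \<union> B \<in> D" if "A \<in> D" "B \<in> D" for A B
      using that unfolding D_def by (auto simp: closure_of_Un)
    then show "\<forall>A\<in>D. \<forall>B\<in>D. \<exists>C\<in>D. A \<union> B \<subseteq> C" by blast
  qed
  ultimately have "\<nu> W = (SUP U\<in>D. \<nu> U)"
    using normal_open_measure_directed_Union[OF D] by simp
  then have "\<nu> W - \<epsilon> < (SUP U\<in>D. \<nu> U)" using \<open>\<epsilon> > 0\<close> by linarith
  moreover have "bdd_above (\<nu> ` D)"
    by (rule bdd_aboveI2[where M = "\<nu> (topspace X)"])
      (use D(2) normal_open_measure_le_topspace in blast)
  ultimately obtain U where U: "openin X U" "X closure_of U \<subseteq> W" "\<nu> W - \<epsilon> < \<nu> U"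
    using less_cSUP_iff[OF D(1)] unfolding D_def by blast
  have open_diff: "openin X (W - X closure_of U)" using assms by (simp add: openin_diff)
  have "U \<subseteq> X closure_of U" using closure_of_subset[OF openin_subset[OF U(1)]] .
  then have "(W - X closure_of U) \<inter> U = {}" "(W - X closure_of U) \<union> U \<subseteq> W"
    using U(2) by blast+
  then have "\<nu> (W - X closure_of U) + \<nu> U \<le> \<nu> W"
    using normal_open_measure_Un_disjoint[OF open_diff U(1)]
      normal_open_measure_mono[OF openin_Un[OF open_diff U(1)] assms(2)] by simp
  then show ?thesis using U by (intro exI[of _ "X closure_of U"]) auto
qed

text \<open>The union of all \<open>\<nu>\<close>-null open sets is again \<open>\<nu>\<close>-null; removing its closure
  leaves a set on which \<open>\<nu>\<close> is faithful.\<close>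
lemma normal_open_measure_faithful_on_subset:
  assumes "openin X U" "\<nu> U \<noteq> 0"
  shows "\<exists>Y. openin X Y \<and> Y \<noteq> {} \<and> Y \<subseteq> U \<and> faithful_on X \<nu> Y"
proof -
  define D where "D = {V. openin X V \<and> \<nu> V = 0}"
  have D: "D \<noteq> {}" "\<forall>V\<in>D. openin X V" "\<forall>A\<in>D. \<forall>B\<in>D. \<exists>C\<in>D. A \<union> B \<subseteq> C"
  proof -
    show "D \<noteq> {}" "\<forall>V\<in>D. openin X V"
      unfolding D_def using normal_open_measure_empty by auto
    have "A \<union> B \<in> D" if "A \<in> D" "B \<in> D" for A B
    proof -
      have "openin X (A \<union> B)" "\<nu> (A \<union> B) \<le> 0"
        using that normal_open_measure_Un_le[of A B] unfolding D_def by auto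
      then show ?thesis
        using normal_open_measure_nonneg[of "A \<union> B"] unfolding D_def by simp
    qed
    then show "\<forall>A\<in>D. \<forall>B\<in>D. \<exists>C\<in>D. A \<union> B \<subseteq> C" by blast
  qed
  define N where "N = \<Union>D"
  have "openin X N" using D unfolding N_def by blast
  have "(SUP V\<in>D. \<nu> V) = (SUP V\<in>D. 0)" by (rule SUP_cong) (auto simp: D_def)
  then have "\<nu> N = 0"
    using normal_open_measure_directed_Union[OF D] \<open>D \<noteq> {}\<close> unfolding N_def by simp
  moreover have "\<nu> (N \<inter> U) \<le> \<nu> N"
    using assms(1) \<open>openin X N\<close> by (intro normal_open_measure_mono) auto
  moreover have "\<nu> U > 0" using assms normal_open_measure_nonneg[of U] by simp
  ultimately have "\<nu> (N \<inter> U) < \<nu> U" by linarith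
  then have "\<not> U \<subseteq> X closure_of (N \<inter> U)"
    using assms \<open>openin X N\<close> by (intro normal_open_measure_not_subset_closure_of) auto
  moreover have "U \<inter> X closure_of N \<subseteq> X closure_of (N \<inter> U)"
    using openin_Int_closure_of_subset[OF assms(1)] by (simp add: Int_commute)
  ultimately have "U - X closure_of N \<noteq> {}" by blast
  moreover have "faithful_on X \<nu> (U - X closure_of N)"
    unfolding faithful_on_def
  proof (intro allI impI)
    fix V assume "openin X V" "V \<subseteq> U - X closure_of N" "V \<noteq> {}"
    moreover have "N \<subseteq> X closure_of N" using closure_of_subset[OF openin_subset[OF \<open>openin X N\<close>]] .
    ultimately show "\<nu> V \<noteq> 0" unfolding N_def D_def by blast
  qed
  ultimately show ?thesis using assms by (intro exI[of _ "U - X closure_of N"]) auto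
qed

end

text \<open>A Baire-type property of a single normal measure: choosing closed \<open>C\<^sub>n \<subseteq> W\<close> inside the
  dense open complements of the closures of \<open>F\<^sub>n\<close> with \<open>\<nu>(W - C\<^sub>n) \<le> \<nu> W / 2\<^sup>n\<^sup>+\<^sup>2\<close>, the
  union of the \<open>W - C\<^sub>n\<close> has measure at most \<open>\<nu> W / 2\<close>, so it is not dense in \<open>W\<close>.\<close>
lemma normal_open_measure_open_avoiding_nowhere_dense:
  fixes F :: "nat \<Rightarrow> 'a set"
  assumes \<nu>: "normal_open_measure X \<nu>" and X: "regular_space X"
    and W: "openin X W" "\<nu> W > 0" and F: "\<And>n. nowhere_dense_in X (F n)"
  shows "\<exists>V. openin X V \<and> V \<noteq> {} \<and> V \<subseteq> W \<and> V \<inter> (\<Union>n. F n) = {}"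
proof -
  define G where "G n = topspace X - X closure_of F n" for n
  have G: "openin X (G n)" "X closure_of G n = topspace X" for n
    unfolding G_def using closure_of_complement_closure_of_nowhere_dense[OF F]
    by (auto simp: openin_diff)
  define \<delta> where "\<delta> n = \<nu> W / 2 * (1 / 2) ^ Suc n" for n
  have \<delta>: "\<delta> sums (\<nu> W / 2)" "\<And>n. \<delta> n > 0"
    unfolding \<delta>_def using sums_mult[OF power_half_series, of "\<nu> W / 2"] W(2) by auto
  have "\<exists>C. closedin X C \<and> C \<subseteq> W \<inter> G n \<and> \<nu> (W \<inter> G n - C) \<le> \<delta> n" for n
    using normal_open_measure_inner_closedin[OF \<nu> X _ \<delta>(2)] W(1) G(1) by blast
  then obtain C where C: "\<And>n. closedin X (C n)" "\<And>n. C n \<subseteq> W \<inter> G n"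
    "\<And>n. \<nu> (W \<inter> G n - C n) \<le> \<delta> n"
    by metis
  have open_diff: "openin X (W - C n)" for n using W(1) C(1) by (simp add: openin_diff)
  have "\<nu> (W - C n) \<le> \<delta> n" for n
  proof -
    have "W \<inter> G n - C n = (W - C n) \<inter> G n" by blast
    then show ?thesis
      using normal_open_measure_dense_Int[OF \<nu> open_diff[of n] G(2,1)[of n]] C(3)[of n] by simp
  qed
  then have "\<nu> (\<Union>n. W - C n) \<le> \<nu> W / 2"
    using normal_open_measure_UN_le_sums[OF \<nu>, where V = "\<lambda>n. W - C n", OF open_diff _ \<delta>(1)]
    by blast
  define H where "H = (\<Union>n. W - C n)"
  have H: "openin X H" "H \<subseteq> W" "\<nu> H < \<nu> W"
  proof -
    show "openin X H" unfolding H_def by (rule openin_Union) (use open_diff in blast)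
    show "H \<subseteq> W" unfolding H_def by blast
    show "\<nu> H < \<nu> W" unfolding H_def using \<open>\<nu> (\<Union>n. W - C n) \<le> \<nu> W / 2\<close> W(2) by linarith
  qed
  then obtain x where x: "x \<in> W" "x \<notin> X closure_of H"
    using normal_open_measure_not_subset_closure_of[OF \<nu> H(1) W(1) H(2,3)] by blast
  have "openin X (W - X closure_of H)" using W(1) by (simp add: openin_diff)
  moreover have "W - X closure_of H \<subseteq> C n" for n
    using closure_of_subset_Int[of X H] openin_subset[OF W(1)] unfolding H_def by blast
  moreover have "F n \<subseteq> X closure_of F n" for n
    using closure_of_subset F[of n] unfolding nowhere_dense_in_def by blast
  ultimately show ?thesis
    using x C(2) unfolding G_def by (intro exI[of _ "W - X closure_of H"]) blast
qed

section \<open>Hyperstonean spaces\<close>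

lemma ems_sigma_finite_if_all_null: "M \<subseteq> N \<Longrightarrow> ems_sigma_finite M N"
  unfolding ems_sigma_finite_def ems_finite_measure_def ems_faithful_def
  by (intro exI[of _ "\<lambda>_. 0"]) auto

locale hyperstonean_space =
  fixes S :: "'a topology"
  assumes hyperstonean: "hyperstonean S"
begin

lemma compact: "compact_space S"
  using hyperstonean by (simp add: hyperstonean_def)

lemma regular: "regular_space S"
  using hyperstonean unfolding hyperstonean_def by (simp add: compact_Hausdorff_imp_regular_space)

lemma exists_normal_open_measure:
  "openin S U \<Longrightarrow> U \<noteq> {} \<Longrightarrow> \<exists>\<nu>. normal_open_measure S \<nu> \<and> \<nu> U \<noteq> 0"
  using hyperstonean by (simp add: hyperstonean_def)

lemma nowhere_dense_in_UN:
  fixes F :: "nat \<Rightarrow> 'a set"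
  assumes F: "\<And>n. nowhere_dense_in S (F n)"
  shows "nowhere_dense_in S (\<Union>n. F n)"
  unfolding nowhere_dense_in_iff
proof (intro conjI allI impI)
  show "(\<Union>n. F n) \<subseteq> topspace S" using F unfolding nowhere_dense_in_def by blast
  fix W assume "openin S W \<and> W \<subseteq> S closure_of (\<Union>n. F n)"
  then have W: "openin S W" "W \<subseteq> S closure_of (\<Union>n. F n)" by blast+
  show "W = {}"
  proof (rule ccontr)
    assume "W \<noteq> {}"
    then obtain \<nu> where \<nu>: "normal_open_measure S \<nu>" "\<nu> W \<noteq> 0"
      using exists_normal_open_measure[OF W(1)] by blast
    then have "\<nu> W > 0" using normal_open_measure_nonneg[OF \<nu>(1) W(1)] by simp
    then obtain V where V: "openin S V" "V \<noteq> {}" "V \<subseteq> W" "V \<inter> (\<Union>n. F n) = {}"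
      using normal_open_measure_open_avoiding_nowhere_dense[where F = F, OF \<nu>(1) regular W(1) _ F]
      by blast
    then have "V \<inter> S closure_of (\<Union>n. F n) = {}"
      using openin_Int_closure_of_eq_empty[OF V(1)] by blast
    moreover have "V \<inter> S closure_of (\<Union>n. F n) = V" using V(3) W(2) by blast
    ultimately show False using V(2) by simp
  qed
qed

lemma nowhere_dense_in_Un:
  assumes "nowhere_dense_in S A" "nowhere_dense_in S B"
  shows "nowhere_dense_in S (A \<union> B)"
proof -
  have "nowhere_dense_in S (\<Union>n. if n = (0::nat) then A else B)"
    using assms by (intro nowhere_dense_in_UN[of "\<lambda>n. if n = 0 then A else B"]) simp
  moreover have "(\<Union>n. if n = (0::nat) then A else B) = A \<union> B" by (auto split: if_splits)
  ultimately show ?thesis by simp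
qed

lemma meager_in_iff_nowhere_dense_in: "meager_in S A \<longleftrightarrow> nowhere_dense_in S A"
proof
  assume "meager_in S A"
  then obtain F :: "nat \<Rightarrow> 'a set" where "\<And>n. nowhere_dense_in S (F n)" "A \<subseteq> (\<Union>n. F n)"
    unfolding meager_in_def by blast
  then show "nowhere_dense_in S A" by (blast intro: nowhere_dense_in_subset nowhere_dense_in_UN)
qed (rule nowhere_dense_in_imp_meager_in)

lemma TM_null_iff: "A \<in> TM_null S \<longleftrightarrow> nowhere_dense_in S A"
  by (simp add: TM_null_def meager_in_iff_nowhere_dense_in)

lemma TM_meas_iff: "m \<in> TM_meas S \<longleftrightarrow> (\<exists>U. openin S U \<and> nowhere_dense_in S (sym_diff m U))"
proof
  assume "m \<in> TM_meas S"
  then obtain U A where "m = sym_diff U A" "openin S U" "meager_in S A"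
    unfolding TM_meas_def by blast
  moreover have "sym_diff m U = A" using calculation(1) by blast
  ultimately show "\<exists>U. openin S U \<and> nowhere_dense_in S (sym_diff m U)"
    by (auto simp: meager_in_iff_nowhere_dense_in)
next
  assume "\<exists>U. openin S U \<and> nowhere_dense_in S (sym_diff m U)"
  then obtain U where "openin S U" "nowhere_dense_in S (sym_diff m U)" by blast
  moreover have "m = sym_diff U (sym_diff m U)" by blast
  ultimately show "m \<in> TM_meas S"
    unfolding TM_meas_def meager_in_iff_nowhere_dense_in by blast
qed

lemma openin_imp_TM_meas: "openin S U \<Longrightarrow> U \<in> TM_meas S"
  unfolding TM_meas_iff by (intro exI[of _ U]) simp

lemma nowhere_dense_in_imp_TM_meas: "nowhere_dense_in S A \<Longrightarrow> A \<in> TM_meas S"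
  unfolding TM_meas_iff by (intro exI[of _ "{}"]) simp

lemma TM_meas_subset_topspace: "m \<in> TM_meas S \<Longrightarrow> m \<subseteq> topspace S"
  unfolding TM_meas_iff nowhere_dense_in_def using openin_subset by blast

text \<open>The open representative of the complement is the exterior \<open>topspace S - S closure_of U\<close>.\<close>
lemma TM_meas_compl:
  assumes "m \<in> TM_meas S"
  shows "topspace S - m \<in> TM_meas S"
proof -
  obtain U where U: "openin S U" "nowhere_dense_in S (sym_diff m U)"
    using assms unfolding TM_meas_iff by blast
  have "sym_diff (topspace S - m) (topspace S - S closure_of U)
      \<subseteq> sym_diff m U \<union> (S closure_of U - U)"
    using closure_of_subset_topspace[of S U] closure_of_subset[OF openin_subset[OF U(1)]] by blast
  moreover have "nowhere_dense_in S (sym_diff m U \<union> (S closure_of U - U))"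
    using nowhere_dense_in_Un[OF U(2) nowhere_dense_in_closure_of_diff_openin[OF U(1)]] .
  ultimately have "nowhere_dense_in S (sym_diff (topspace S - m) (topspace S - S closure_of U))"
    by (rule nowhere_dense_in_subset[rotated])
  moreover have "openin S (topspace S - S closure_of U)" by (simp add: openin_diff)
  ultimately show ?thesis unfolding TM_meas_iff by blast
qed

lemma TM_meas_UN:
  fixes A :: "nat \<Rightarrow> 'a set"
  assumes "\<And>n. A n \<in> TM_meas S"
  shows "(\<Union>n. A n) \<in> TM_meas S"
proof -
  obtain U where U: "\<And>n. openin S (U n)" "\<And>n. nowhere_dense_in S (sym_diff (A n) (U n))"
    using assms unfolding TM_meas_iff by metis
  have "sym_diff (\<Union>n. A n) (\<Union>n. U n) \<subseteq> (\<Union>n. sym_diff (A n) (U n))" by blast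
  moreover have "openin S (\<Union>n. U n)" using U(1) by (intro openin_Union) auto
  moreover have "nowhere_dense_in S (\<Union>n. sym_diff (A n) (U n))"
    using U(2) by (rule nowhere_dense_in_UN)
  ultimately show ?thesis unfolding TM_meas_iff by (blast intro: nowhere_dense_in_subset)
qed

lemma sigma_algebra_TM_meas: "sigma_algebra (topspace S) (TM_meas S)"
  unfolding sigma_algebra_iff2
  using TM_meas_subset_topspace openin_imp_TM_meas[of "{}"] TM_meas_compl TM_meas_UN
  by (auto simp: range_subsetD)

lemma enhanced_measurable_space_TM: "enhanced_measurable_space (topspace S) (TM_meas S) (TM_null S)"
  unfolding enhanced_measurable_space_def
proof (intro conjI allI impI)
  show "TM_null S \<subseteq> TM_meas S" by (auto simp: TM_null_iff nowhere_dense_in_imp_TM_meas)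
  fix F :: "nat \<Rightarrow> 'a set"
  assume "range F \<subseteq> TM_null S"
  then have "nowhere_dense_in S (F n)" for n using TM_null_iff by blast
  then show "(\<Union>n. F n) \<in> TM_null S" using nowhere_dense_in_UN[of F] by (simp add: TM_null_iff)
qed (auto simp: sigma_algebra_TM_meas TM_null_iff intro: nowhere_dense_in_subset)

text \<open>The closed set is the closure of a small open neighbourhood inside the open part of \<open>m\<close>.\<close>
lemma TM_meas_contains_closedin:
  assumes "m \<in> TM_meas S" "m \<notin> TM_null S"
  shows "\<exists>C. closedin S C \<and> C \<notin> TM_null S \<and> C \<subseteq> m"
proof -
  obtain U where U: "openin S U" "nowhere_dense_in S (sym_diff m U)"
    using assms(1) unfolding TM_meas_iff by blast
  let ?W = "U - S closure_of (sym_diff m U)"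
  have "?W \<noteq> {}"
  proof
    assume "?W = {}"
    then have "U = {}" using U unfolding nowhere_dense_in_iff by blast
    then show False using U(2) assms(2) by (simp add: TM_null_iff)
  qed
  then obtain x where "x \<in> ?W" by blast
  moreover have "openin S ?W" by (rule openin_diff[OF U(1) closedin_closure_of])
  ultimately obtain V where V: "openin S V" "x \<in> V" "S closure_of V \<subseteq> ?W"
    using regular_space_closure_of_subset_openin[OF regular] by blast
  have "V \<subseteq> S closure_of V" using closure_of_subset[OF openin_subset[OF V(1)]] .
  then have "S closure_of V \<notin> TM_null S"
    using V(1,2) unfolding TM_null_iff
    by (auto dest: nowhere_dense_in_subset openin_nowhere_dense_in_eq_empty)
  moreover have "?W \<subseteq> m"
    using closure_of_subset[of "sym_diff m U" S] U(2) unfolding nowhere_dense_in_def by blast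
  ultimately show ?thesis using V(3) by (intro exI[of _ "S closure_of V"]) auto
qed

lemma compact_ems_TM: "compact_ems (TM_meas S) (TM_null S)"
  unfolding compact_ems_def
proof (intro exI conjI)
  show "{C. closedin S C} \<subseteq> TM_meas S"
  proof
    fix C assume "C \<in> {C. closedin S C}"
    then have "C \<subseteq> topspace S" "openin S (topspace S - C)" by (simp_all add: closedin_def)
    then have "topspace S - (topspace S - C) \<in> TM_meas S" by (intro TM_meas_compl openin_imp_TM_meas)
    moreover have "topspace S - (topspace S - C) = C" using \<open>C \<subseteq> topspace S\<close> by blast
    ultimately show "C \<in> TM_meas S" by simp
  qed
  show "compact_class {C. closedin S C}"
    unfolding compact_class_def
  proof (intro allI impI)
    fix \<U> assume "\<U> \<subseteq> {C. closedin S C}"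
      and "\<forall>G. G \<subseteq> \<U> \<longrightarrow> finite G \<longrightarrow> G \<noteq> {} \<longrightarrow> \<Inter>G \<noteq> {}"
    then show "\<Inter>\<U> \<noteq> {}"
      using compact[unfolded compact_space_fip, rule_format, of \<U>] by blast
  qed
  show "\<forall>m\<in>TM_meas S - TM_null S. \<exists>k\<in>{C. closedin S C} - TM_null S. k \<subseteq> m"
    using TM_meas_contains_closedin by blast
qed

definition open_repr :: "'a set \<Rightarrow> 'a set" where
  "open_repr m = (SOME U. openin S U \<and> nowhere_dense_in S (sym_diff m U))"

lemma open_repr:
  assumes "m \<in> TM_meas S"
  shows "openin S (open_repr m)" "nowhere_dense_in S (sym_diff m (open_repr m))"
  using someI_ex[OF assms[unfolded TM_meas_iff]] unfolding open_repr_def by blast+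

text \<open>Two open representatives have the same closure, hence the same normal measure.\<close>
lemma normal_open_measure_open_repr:
  assumes \<nu>: "normal_open_measure S \<nu>"
    and U: "openin S U" "nowhere_dense_in S (sym_diff m U)"
  shows "\<nu> (open_repr m) = \<nu> U"
proof -
  have m: "m \<in> TM_meas S" using U unfolding TM_meas_iff by blast
  note V = open_repr[OF m]
  have "sym_diff (open_repr m) U \<subseteq> sym_diff m (open_repr m) \<union> sym_diff m U" by blast
  then have "nowhere_dense_in S (sym_diff (open_repr m) U)"
    by (rule nowhere_dense_in_subset[OF nowhere_dense_in_Un[OF V(2) U(2)]])
  then have closure_eq: "S closure_of open_repr m = S closure_of U"
    by (rule closure_of_eq_if_nowhere_dense_sym_diff[OF V(1) U(1)])
  have "\<nu> (open_repr m) = \<nu> (S closure_of open_repr m)"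
    using normal_open_measure_closure_of[OF \<nu> V(1)] by simp
  also have "\<dots> = \<nu> U"
    unfolding closure_eq using normal_open_measure_closure_of[OF \<nu> U(1)] .
  finally show ?thesis .
qed

lemma normal_open_measure_open_repr_sums:
  fixes F :: "nat \<Rightarrow> 'a set"
  assumes \<nu>: "normal_open_measure S \<nu>" and F: "\<And>n. F n \<in> TM_meas S" "disjoint_family F"
  shows "(\<lambda>n. \<nu> (open_repr (F n))) sums \<nu> (open_repr (\<Union>n. F n))"
proof -
  define U where "U n = open_repr (F n)" for n
  have U: "openin S (U n)" "nowhere_dense_in S (sym_diff (F n) (U n))" for n
    unfolding U_def using open_repr[OF F(1)[of n]] by blast+
  have "disjoint_family U"
    unfolding disjoint_family_on_def
  proof (intro ballI impI)
    fix i j :: nat assume "i \<noteq> j"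
    then have "F i \<inter> F j = {}" using disjoint_family_onD[OF F(2)] by blast
    then have "U i \<inter> U j \<subseteq> sym_diff (F i) (U i) \<union> sym_diff (F j) (U j)" by blast
    then have "nowhere_dense_in S (U i \<inter> U j)"
      by (rule nowhere_dense_in_subset[OF nowhere_dense_in_Un[OF U(2) U(2)]])
    then show "U i \<inter> U j = {}"
      using openin_Int[OF U(1) U(1)] openin_nowhere_dense_in_eq_empty by blast
  qed
  have "sym_diff (\<Union>n. F n) (\<Union>n. U n) \<subseteq> (\<Union>n. sym_diff (F n) (U n))" by blast
  then have "nowhere_dense_in S (sym_diff (\<Union>n. F n) (\<Union>n. U n))"
    by (rule nowhere_dense_in_subset[OF nowhere_dense_in_UN[of "\<lambda>n. sym_diff (F n) (U n)", OF U(2)]])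
  moreover have "openin S (\<Union>n. U n)" using U(1) by (intro openin_Union) auto
  ultimately have "\<nu> (open_repr (\<Union>n. F n)) = \<nu> (\<Union>n. U n)"
    using normal_open_measure_open_repr[OF \<nu>] by blast
  then show ?thesis
    using normal_open_measure_sums[OF \<nu>, where V = U, OF U(1) \<open>disjoint_family U\<close>]
    unfolding U_def by simp
qed

text \<open>On a set where \<open>\<nu>\<close> is faithful, \<open>m \<mapsto> \<nu> (open_repr m)\<close> is a faithful finite measure.\<close>
lemma ems_sigma_finite_faithful_on:
  assumes \<nu>: "normal_open_measure S \<nu>" and Y: "openin S Y" "faithful_on S \<nu> Y"
  shows "ems_sigma_finite {A \<in> TM_meas S. A \<subseteq> Y} {A \<in> TM_null S. A \<subseteq> Y}"
  unfolding ems_sigma_finite_def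
proof (intro exI conjI)
  let ?\<mu> = "\<lambda>m. complex_of_real (\<nu> (open_repr m))"
  show "ems_finite_measure {A \<in> TM_meas S. A \<subseteq> Y} {A \<in> TM_null S. A \<subseteq> Y} ?\<mu>"
    unfolding ems_finite_measure_def
  proof (intro conjI allI impI ballI)
    fix F :: "nat \<Rightarrow> 'a set"
    assume "range F \<subseteq> {A \<in> TM_meas S. A \<subseteq> Y}" "disjoint_family F"
    then show "(\<lambda>n. ?\<mu> (F n)) sums ?\<mu> (\<Union>n. F n)"
      using normal_open_measure_open_repr_sums[OF \<nu>, of F] by (simp add: sums_of_real_iff image_subset_iff)
  next
    fix A assume "A \<in> {A \<in> TM_null S. A \<subseteq> Y}"
    then have "\<nu> (open_repr A) = \<nu> {}"
      by (intro normal_open_measure_open_repr[OF \<nu>]) (auto simp: TM_null_iff)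
    then show "?\<mu> A = 0" by (simp add: normal_open_measure_empty[OF \<nu>])
  qed
  show "ems_faithful {A \<in> TM_meas S. A \<subseteq> Y} {A \<in> TM_null S. A \<subseteq> Y} ?\<mu>"
    unfolding ems_faithful_def
  proof (intro ballI impI)
    fix m assume m: "m \<in> {A \<in> TM_meas S. A \<subseteq> Y}"
      and null: "\<forall>A\<in>{A \<in> TM_meas S. A \<subseteq> Y}. A \<subseteq> m \<longrightarrow> ?\<mu> A = 0"
    let ?U = "open_repr m"
    have U: "openin S ?U" "nowhere_dense_in S (sym_diff m ?U)" using open_repr m by auto
    have UY: "openin S (?U \<inter> Y)" using U(1) Y(1) by blast
    have "\<nu> ?U = 0" using null m by auto
    then have "\<nu> (?U \<inter> Y) = 0"
      using normal_open_measure_mono[OF \<nu> UY U(1)] normal_open_measure_nonneg[OF \<nu> UY] by simp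
    then have "?U \<inter> Y = {}" using Y(2) UY unfolding faithful_on_def by blast
    then have "m \<subseteq> sym_diff m ?U" using m by blast
    then show "m \<in> {A \<in> TM_null S. A \<subseteq> Y}"
      using m nowhere_dense_in_subset[OF U(2)] by (simp add: TM_null_iff)
  qed
qed

lemma ems_sigma_finite_nowhere_dense:
  assumes "nowhere_dense_in S Z"
  shows "ems_sigma_finite {A \<in> TM_meas S. A \<subseteq> Z} {A \<in> TM_null S. A \<subseteq> Z}"
proof (rule ems_sigma_finite_if_all_null)
  show "{A \<in> TM_meas S. A \<subseteq> Z} \<subseteq> {A \<in> TM_null S. A \<subseteq> Z}"
    using nowhere_dense_in_subset[OF assms] by (auto simp: TM_null_iff)
qed

lemma nowhere_dense_in_local_dense_cover:
  assumes \<F>: "\<forall>Y\<in>\<F>. openin S Y" "S closure_of \<Union>\<F> = topspace S"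
    and A: "A \<subseteq> topspace S" "\<And>Y. Y \<in> \<F> \<Longrightarrow> nowhere_dense_in S (A \<inter> Y)"
  shows "nowhere_dense_in S A"
proof -
  have "nowhere_dense_in S (A \<inter> \<Union>\<F>)"
  proof (rule nowhere_dense_in_local[OF \<F>(1)])
    fix Y assume "Y \<in> \<F>"
    then show "nowhere_dense_in S (A \<inter> \<Union>\<F> \<inter> Y)"
      by (rule nowhere_dense_in_subset[OF A(2)]) blast
  qed blast
  moreover have "nowhere_dense_in S (topspace S - \<Union>\<F>)"
    using \<F> by (intro nowhere_dense_in_complement_dense_open openin_Union) auto
  then have "nowhere_dense_in S (A - \<Union>\<F>)"
    by (rule nowhere_dense_in_subset) (use A(1) in blast)
  ultimately have "nowhere_dense_in S (A \<inter> \<Union>\<F> \<union> (A - \<Union>\<F>))"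
    by (rule nowhere_dense_in_Un)
  then show ?thesis by (simp add: Int_Diff_Un)
qed

lemma TM_meas_local_dense_cover:
  assumes \<F>: "\<forall>Y\<in>\<F>. openin S Y" "pairwise disjnt \<F>" "S closure_of \<Union>\<F> = topspace S"
    and A: "A \<subseteq> topspace S" "\<forall>Y\<in>\<F>. A \<inter> Y \<in> TM_meas S"
  shows "A \<in> TM_meas S"
proof -
  obtain U where "\<forall>Y\<in>\<F>. openin S (U Y) \<and> nowhere_dense_in S (sym_diff (A \<inter> Y) (U Y))"
    using bchoice[OF A(2)[unfolded TM_meas_iff]] by blast
  then have U: "openin S (U Y)" "nowhere_dense_in S (sym_diff (A \<inter> Y) (U Y))" if "Y \<in> \<F>" for Y
    using that by blast+
  define V where "V = (\<Union>Y\<in>\<F>. U Y \<inter> Y)"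
  have "openin S V" unfolding V_def using U(1) \<F>(1) by (intro openin_Union) auto
  have "sym_diff A V \<subseteq> topspace S" using A(1) openin_subset[OF \<open>openin S V\<close>] by blast
  moreover have "nowhere_dense_in S (sym_diff A V \<inter> Y)" if "Y \<in> \<F>" for Y
  proof -
    have same: "Y' = Y" if "Y' \<in> \<F>" "x \<in> Y'" "x \<in> Y" for Y' x
    proof (rule ccontr)
      assume "Y' \<noteq> Y"
      then have "disjnt Y' Y" using pairwiseD(1)[OF \<F>(2) that(1) \<open>Y \<in> \<F>\<close>] by blast
      then show False using that(2,3) by (auto simp: disjnt_def)
    qed
    have "V \<inter> Y \<subseteq> U Y"
    proof
      fix x assume "x \<in> V \<inter> Y"
      then obtain Y' where "Y' \<in> \<F>" "x \<in> U Y'" "x \<in> Y'" "x \<in> Y" unfolding V_def by blast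
      moreover have "Y' = Y" using \<open>Y' \<in> \<F>\<close> \<open>x \<in> Y'\<close> \<open>x \<in> Y\<close> by (rule same)
      ultimately show "x \<in> U Y" by simp
    qed
    moreover have "U Y \<inter> Y \<subseteq> V" unfolding V_def using that by blast
    ultimately have "sym_diff A V \<inter> Y \<subseteq> sym_diff (A \<inter> Y) (U Y)" by blast
    then show ?thesis by (rule nowhere_dense_in_subset[OF U(2)[OF that]])
  qed
  ultimately have "nowhere_dense_in S (sym_diff A V)"
    by (rule nowhere_dense_in_local_dense_cover[OF \<F>(1,3)])
  then show ?thesis unfolding TM_meas_iff using \<open>openin S V\<close> by blast
qed

lemma strictly_localizable_TM_if_dense_family:
  assumes \<F>: "\<forall>Y\<in>\<F>. openin S Y \<and> (\<exists>\<nu>. normal_open_measure S \<nu> \<and> faithful_on S \<nu> Y)"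
      "pairwise disjnt \<F>" "S closure_of \<Union>\<F> = topspace S"
  shows "strictly_localizable (topspace S) (TM_meas S) (TM_null S)"
proof -
  interpret TM: sigma_algebra "topspace S" "TM_meas S" by (rule sigma_algebra_TM_meas)
  have open_\<F>: "\<forall>Y\<in>\<F>. openin S Y" using \<F>(1) by blast
  define Z where "Z = topspace S - \<Union>\<F>"
  have Z: "nowhere_dense_in S Z"
    unfolding Z_def using open_\<F> \<F>(3) by (intro nowhere_dense_in_complement_dense_open) auto
  have sets: "Y \<in> TM_meas S" if "Y \<in> insert Z \<F>" for Y
    using that Z open_\<F> nowhere_dense_in_imp_TM_meas openin_imp_TM_meas by blast
  show ?thesis
    unfolding strictly_localizable_def
  proof (intro exI[of _ "insert Z \<F>"] conjI allI impI ballI)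
    show "insert Z \<F> \<subseteq> TM_meas S" using sets by blast
    have "\<Union>\<F> \<subseteq> topspace S" using open_\<F> by (auto dest: openin_subset)
    then show "\<Union>(insert Z \<F>) = topspace S" unfolding Z_def by blast
    show "Y \<inter> Y' = {}" if "Y \<in> insert Z \<F>" "Y' \<in> insert Z \<F>" "Y \<noteq> Y'" for Y Y'
      using that pairwiseD(1)[OF \<F>(2)] unfolding Z_def disjnt_def by blast
    show "ems_sigma_finite {A \<in> TM_meas S. A \<subseteq> Y} {A \<in> TM_null S. A \<subseteq> Y}"
      if Y: "Y \<in> insert Z \<F>" for Y
    proof (cases "Y = Z")
      case True
      then show ?thesis using Z by (simp add: ems_sigma_finite_nowhere_dense)
    next
      case False
      then obtain \<nu> where "normal_open_measure S \<nu>" "openin S Y" "faithful_on S \<nu> Y"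
        using Y \<F>(1) by blast
      then show ?thesis by (rule ems_sigma_finite_faithful_on)
    qed
    show "A \<in> TM_meas S \<longleftrightarrow> (\<forall>Y\<in>insert Z \<F>. A \<inter> Y \<in> TM_meas S)" if "A \<subseteq> topspace S" for A
    proof
      assume "A \<in> TM_meas S"
      then show "\<forall>Y\<in>insert Z \<F>. A \<inter> Y \<in> TM_meas S" using sets TM.Int by blast
    next
      assume "\<forall>Y\<in>insert Z \<F>. A \<inter> Y \<in> TM_meas S"
      then show "A \<in> TM_meas S" using TM_meas_local_dense_cover[OF open_\<F> \<F>(2,3) that] by blast
    qed
    show "A \<in> TM_null S \<longleftrightarrow> (\<forall>Y\<in>insert Z \<F>. A \<inter> Y \<in> TM_null S)" if "A \<subseteq> topspace S" for A
    proof
      assume "A \<in> TM_null S"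
      then show "\<forall>Y\<in>insert Z \<F>. A \<inter> Y \<in> TM_null S"
        using nowhere_dense_in_subset[of S A] by (simp add: TM_null_iff)
    next
      assume "\<forall>Y\<in>insert Z \<F>. A \<inter> Y \<in> TM_null S"
      then show "A \<in> TM_null S"
        using nowhere_dense_in_local_dense_cover[OF open_\<F> \<F>(3) that] by (simp add: TM_null_iff)
    qed
  qed
qed

lemma strictly_localizable_TM: "strictly_localizable (topspace S) (TM_meas S) (TM_null S)"
proof -
  let ?\<G> = "{Y. openin S Y \<and> Y \<noteq> {} \<and> (\<exists>\<nu>. normal_open_measure S \<nu> \<and> faithful_on S \<nu> Y)}"
  have "\<exists>Y\<in>?\<G>. Y \<subseteq> U" if U: "openin S U" "U \<noteq> {}" for U
  proof -
    obtain \<nu> where \<nu>: "normal_open_measure S \<nu>" "\<nu> U \<noteq> 0"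
      using exists_normal_open_measure[OF U] by blast
    show ?thesis using normal_open_measure_faithful_on_subset[OF \<nu>(1) U(1) \<nu>(2)] \<nu>(1) by blast
  qed
  then obtain \<F> where "\<F> \<subseteq> ?\<G>" "pairwise disjnt \<F>" "S closure_of \<Union>\<F> = topspace S"
    using exists_pairwise_disjnt_dense_subfamily[of ?\<G> S] by auto
  then show ?thesis by (intro strictly_localizable_TM_if_dense_family) auto
qed

lemma cslems_TM: "cslems (topspace S) (TM_meas S) (TM_null S)"
  unfolding cslems_def
  using enhanced_measurable_space_TM compact_ems_TM strictly_localizable_TM by blast

end

section \<open>Functoriality\<close>

lemma nowhere_dense_in_continuous_open_preimage:
  assumes f: "continuous_map X Y f" "open_map X Y f" and B: "nowhere_dense_in Y B"
  shows "nowhere_dense_in X {x \<in> topspace X. f x \<in> B}"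
  unfolding nowhere_dense_in_iff
proof (intro conjI allI impI)
  show "{x \<in> topspace X. f x \<in> B} \<subseteq> topspace X" by blast
  fix T assume T: "openin X T \<and> T \<subseteq> X closure_of {x \<in> topspace X. f x \<in> B}"
  have "X closure_of {x \<in> topspace X. f x \<in> B} \<subseteq> {x \<in> topspace X. f x \<in> Y closure_of B}"
    using B closure_of_subset closedin_continuous_map_preimage[OF f(1) closedin_closure_of]
    by (intro closure_of_minimal) (auto simp: nowhere_dense_in_def)
  then have "f ` T \<subseteq> Y closure_of B" using T by blast
  moreover have "openin Y (f ` T)" using f(2) T unfolding open_map_def by blast
  ultimately show "T = {}" using B unfolding nowhere_dense_in_iff by blast
qed

lemma meager_in_continuous_open_preimage:
  assumes f: "continuous_map X Y f" "open_map X Y f" and A: "meager_in Y A"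
  shows "meager_in X {x \<in> topspace X. f x \<in> A}"
proof -
  obtain F :: "nat \<Rightarrow> 'b set" where "\<forall>n. nowhere_dense_in Y (F n)" "A \<subseteq> (\<Union>n. F n)"
    using A unfolding meager_in_def by blast
  then show ?thesis
    unfolding meager_in_def
    by (intro conjI exI[of _ "\<lambda>n. {x \<in> topspace X. f x \<in> F n}"])
      (auto intro: nowhere_dense_in_continuous_open_preimage[OF f])
qed

lemma TM_meas_continuous_open_preimage:
  assumes f: "continuous_map X Y f" "open_map X Y f" and m: "m \<in> TM_meas Y"
  shows "{x \<in> topspace X. f x \<in> m} \<in> TM_meas X"
proof -
  obtain U A where m: "m = sym_diff U A" and U: "openin Y U" and A: "meager_in Y A"
    using m unfolding TM_meas_def by blast
  have "{x \<in> topspace X. f x \<in> m} =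
      sym_diff {x \<in> topspace X. f x \<in> U} {x \<in> topspace X. f x \<in> A}"
    unfolding m by blast
  moreover have "openin X {x \<in> topspace X. f x \<in> U}"
    using openin_continuous_map_preimage[OF f(1) U] .
  moreover have "meager_in X {x \<in> topspace X. f x \<in> A}"
    using meager_in_continuous_open_preimage[OF f A] .
  ultimately show ?thesis unfolding TM_meas_def by blast
qed

lemma TM_null_continuous_open_preimage:
  "continuous_map X Y f \<Longrightarrow> open_map X Y f \<Longrightarrow> A \<in> TM_null Y \<Longrightarrow>
    {x \<in> topspace X. f x \<in> A} \<in> TM_null X"
  unfolding TM_null_def using meager_in_continuous_open_preimage by blast

theorem mainTheorem7:
  shows "(\<forall>S :: 'a topology. hyperstonean S \<longrightarrow>
            cslems (topspace S) (TM_meas S) (TM_null S)) \<and>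
         (\<forall>(S :: 'a topology) (S' :: 'b topology) f.
            hyperstonean S \<longrightarrow> hyperstonean S' \<longrightarrow>
            continuous_map S S' f \<longrightarrow> open_map S S' f \<longrightarrow>
            (\<forall>m\<in>TM_meas S'. {x \<in> topspace S. f x \<in> m} \<in> TM_meas S) \<and>
            (\<forall>n\<in>TM_null S'. {x \<in> topspace S. f x \<in> n} \<in> TM_null S))"
proof (intro conjI allI impI ballI)
  fix S :: "'a topology"
  assume "hyperstonean S"
  then interpret hyperstonean_space S by unfold_locales
  show "cslems (topspace S) (TM_meas S) (TM_null S)" by (rule cslems_TM)
next
  fix S :: "'a topology" and S' :: "'b topology" and f m
  assume "continuous_map S S' f" "open_map S S' f" "m \<in> TM_meas S'"
  then show "{x \<in> topspace S. f x \<in> m} \<in> TM_meas S" by (rule TM_meas_continuous_open_preimage)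
next
  fix S :: "'a topology" and S' :: "'b topology" and f n
  assume "continuous_map S S' f" "open_map S S' f" "n \<in> TM_null S'"
  then show "{x \<in> topspace S. f x \<in> n} \<in> TM_null S" by (rule TM_null_continuous_open_preimage)
qed

end
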